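(* Let $\mathcal{L}$ be a countable collection of languages containing two distinct languages $L_i,L_j$ with $|L_i\cap L_j|=\infty$ and $|L_i\setminus L_j|<\infty$. Then for every $\varepsilon>0$, no online randomized identification algorithm that is $\varepsilon$-DP in the continual release model identifies $\mathcal{L}$ in the limit.
   Context: $\mathcal{X}$ is a countable universe; a language is an infinite subset of $\mathcal{X}$; $\mathcal{L}=\{L_1,L_2,\dots\}$ is a countable collection known to the algorithm. An enumeration of $K$ is an infinite sequence $x_1,x_2,\dots$ of elements of $K$ (repetitions allowed) in which every element of $K$ appears. An online randomized identification algorithm, after seeing $x_{1:n}$, outputs an index $i_n$ depending only on $x_{1:n}$ and internal randomness (no computability constraints). It identifies $\mathcal{L}$ in the limit if for every $K\in\mathcal{L}$ and every enumeration of $K$, with probability $1$ there exists $n^\star$ such that for all $n\ge n^\star$, $i_n=i_{n^\star}$ and $L_{i_n}=K$. Streams are neighboring if they differ at exactly one time step; the algorithm is $\varepsilon$-DP in the continual release model if for all neighboring input streams $x,x'$ and every measurable set $E$ of entire output sequences, $\Pr[(i_n)_n(x)\in E]\le e^\varepsilon\Pr[(i_n)_n(x')\in E]$. *)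

theory Defs
  imports "HOL-Probability.Probability"
begin

text \<open>Streams are \<open>s :: nat \<Rightarrow> 'x\<close> (the paper's x_1, x_2, ... is s 0, s 1, ...).
  A randomized online algorithm is a probability space \<open>M\<close> of internal randomness
  together with \<open>A :: 'x list \<Rightarrow> 'w \<Rightarrow> nat\<close>: after seeing the prefix x_{1:n}
  (the list of the first n stream elements) with randomness \<open>\<omega>\<close> it outputs the
  index \<open>A [x_1,...,x_n] \<omega>\<close>.\<close>

definition prefix_of :: "(nat \<Rightarrow> 'x) \<Rightarrow> nat \<Rightarrow> 'x list" where
  "prefix_of s n = map s [0..<n]"

text \<open>The entire output sequence (i_1, i_2, ...) ; index n here corresponds to i_{n+1}.\<close>
definition output_seq :: "('x list \<Rightarrow> 'w \<Rightarrow> nat) \<Rightarrow> (nat \<Rightarrow> 'x) \<Rightarrow> 'w \<Rightarrow> (nat \<Rightarrow> nat)" where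
  "output_seq A s \<omega> = (\<lambda>n. A (prefix_of s (Suc n)) \<omega>)"

definition online_rand_alg :: "'w measure \<Rightarrow> ('x list \<Rightarrow> 'w \<Rightarrow> nat) \<Rightarrow> bool" where
  "online_rand_alg M A \<longleftrightarrow> prob_space M \<and>
     (\<forall>xs. A xs \<in> measurable M (count_space UNIV))"

definition is_language :: "'x set \<Rightarrow> bool" where
  "is_language K \<longleftrightarrow> infinite K"

definition is_enumeration :: "(nat \<Rightarrow> 'x) \<Rightarrow> 'x set \<Rightarrow> bool" where
  "is_enumeration s K \<longleftrightarrow> range s = K"

definition identifies_in_limit ::
  "'w measure \<Rightarrow> ('x list \<Rightarrow> 'w \<Rightarrow> nat) \<Rightarrow> (nat \<Rightarrow> 'x set) \<Rightarrow> bool" where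
  "identifies_in_limit M A L \<longleftrightarrow>
     (\<forall>K \<in> range L. \<forall>s. is_enumeration s K \<longrightarrow>
        (AE \<omega> in M. \<exists>n0\<ge>1. \<forall>n\<ge>n0.
            A (prefix_of s n) \<omega> = A (prefix_of s n0) \<omega> \<and> L (A (prefix_of s n) \<omega>) = K))"

definition neighboring :: "(nat \<Rightarrow> 'x) \<Rightarrow> (nat \<Rightarrow> 'x) \<Rightarrow> bool" where
  "neighboring s s' \<longleftrightarrow> (\<exists>t. s t \<noteq> s' t \<and> (\<forall>u. u \<noteq> t \<longrightarrow> s u = s' u))"

definition dp_continual ::
  "real \<Rightarrow> 'w measure \<Rightarrow> ('x list \<Rightarrow> 'w \<Rightarrow> nat) \<Rightarrow> bool" where
  "dp_continual \<epsilon> M A \<longleftrightarrow>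
     (\<forall>s s' E. neighboring s s' \<longrightarrow>
        E \<in> sets (PiM UNIV (\<lambda>_::nat. count_space (UNIV::nat set))) \<longrightarrow>
        measure M {\<omega> \<in> space M. output_seq A s \<omega> \<in> E}
          \<le> exp \<epsilon> * measure M {\<omega> \<in> space M. output_seq A s' \<omega> \<in> E})"

end

theory Submission
  imports Defs
begin

text \<open>
  Write K = L i and K' = L j. Because K - K' is finite, a stream that starts with an arbitrary
  finite word p and continues with an enumeration of K \<inter> K' in which every element recurs
  infinitely often differs in only finitely many positions from an enumeration of K. Applying
  the privacy guarantee once per such position (group privacy) bounds the probability of an
  output other than K on the first stream by a constant times the same probability on the
  second, which tends to 0. Hence every finite word over K' has an extension over K' after
  which the algorithm outputs K with probability above 1/2. Alternating such extensions with
  the elements of K', one at a time, yields an enumeration of K' on which the output is K with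
  probability above 1/2 at infinitely many times, whereas identification forces the output to
  be K' with probability tending to 1.
\<close>

lemma length_prefix_of [simp]: "length (prefix_of s n) = n"
  by (simp add: prefix_of_def)

lemma nth_prefix_of [simp]: "k < n \<Longrightarrow> prefix_of s n ! k = s k"
  by (simp add: prefix_of_def)

definition overwrite_prefix :: "'a list \<Rightarrow> (nat \<Rightarrow> 'a) \<Rightarrow> nat \<Rightarrow> 'a" where
  "overwrite_prefix p e n = (if n < length p then p ! n else e n)"

lemma overwrite_prefix_beyond: "length p \<le> n \<Longrightarrow> overwrite_prefix p e n = e n"
  by (simp add: overwrite_prefix_def)

lemma range_overwrite_prefix: "range (overwrite_prefix p e) \<subseteq> set p \<union> range e"
  by (auto simp: overwrite_prefix_def)

lemma set_subset_range_overwrite_prefix: "set p \<subseteq> range (overwrite_prefix p e)"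
  by (auto simp: overwrite_prefix_def in_set_conv_nth)

lemma prefix_of_overwrite_prefix:
  assumes "length p \<le> T"
  shows "prefix_of (overwrite_prefix p e) T = p @ map e [length p..<T]"
  by (rule nth_equalityI) (use assms in \<open>auto simp: overwrite_prefix_def nth_append\<close>)

lemma is_enumeration_overwrite_prefix:
  assumes "set p \<union> range e = K" and "\<And>x N. x \<in> range e \<Longrightarrow> \<exists>n\<ge>N. e n = x"
  shows "is_enumeration (overwrite_prefix p e) K"
proof -
  have "x \<in> range (overwrite_prefix p e)" if "x \<in> range e" for x
    using assms(2)[OF that, of "length p"] by (metis overwrite_prefix_beyond rangeI)
  then show ?thesis
    using assms(1) range_overwrite_prefix[of p e] set_subset_range_overwrite_prefix[of p e]
    by (auto simp: is_enumeration_def)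
qed

lemma countable_enumeration_infinitely_often:
  fixes C :: "'a set"
  assumes "countable C" "C \<noteq> {}"
  obtains e :: "nat \<Rightarrow> 'a" where "range e = C" "\<And>x N. x \<in> C \<Longrightarrow> \<exists>n\<ge>N. e n = x"
proof
  define e where "e n = from_nat_into C (fst (prod_decode n))" for n
  have hit: "e (prod_encode (to_nat_on C x, N)) = x" if "x \<in> C" for x N
    using assms that by (simp add: e_def from_nat_into_to_nat_on)
  show "\<exists>n\<ge>N. e n = x" if "x \<in> C" for x N
    using hit[OF that] le_prod_encode_2 by blast
  have "range e \<subseteq> C"
    using from_nat_into[OF assms(2)] by (auto simp: e_def)
  moreover have "C \<subseteq> range e"
    using hit by (metis rangeI subsetI)
  ultimately show "range e = C" ..
qed

lemma enumeration_with_infinitely_many_bad_prefixes: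
  fixes K :: "'x set" and Bad :: "'x list \<Rightarrow> bool"
  assumes "countable K" "K \<noteq> {}"
    and extend: "\<And>p. set p \<subseteq> K \<Longrightarrow> \<exists>q. set q \<subseteq> K \<and> Bad (p @ q)"
  obtains y where "is_enumeration y K" "\<And>N. \<exists>T\<ge>N. Bad (prefix_of y T)"
proof -
  obtain ext where ext: "\<And>p. set p \<subseteq> K \<Longrightarrow> set (ext p) \<subseteq> K \<and> Bad (p @ ext p)"
    using extend by metis
  define v where "v = from_nat_into K"
  have range_v: "range v = K"
    unfolding v_def using assms(2,1) by (rule range_from_nat_into)
  define P where "P = rec_nat [] (\<lambda>n p. p @ ext p @ [v n])"
  have P_Suc: "P (Suc n) = P n @ ext (P n) @ [v n]" for n
    by (simp add: P_def)
  have set_P: "set (P n) \<subseteq> K" for n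
    by (induction n) (use ext range_v in \<open>auto simp: P_def\<close>)
  have length_P: "n \<le> length (P n)" for n
    by (induction n) (auto simp: P_Suc)
  have P_extends: "\<exists>r. P n = P m @ r" if "m \<le> n" for m n
    using that
  proof (induction n rule: dec_induct)
    case (step n)
    then show ?case by (metis P_Suc append.assoc)
  qed simp
  define y where "y k = P (Suc k) ! k" for k
  have y_nth: "y k = P n ! k" if "k < length (P n)" for k n
  proof -
    obtain r r' where "P (max n (Suc k)) = P n @ r" "P (max n (Suc k)) = P (Suc k) @ r'"
      using P_extends by (metis max.cobounded1 max.cobounded2)
    moreover have "k < length (P (Suc k))"
      using length_P[of "Suc k"] by simp
    ultimately show ?thesis
      using that by (metis nth_append y_def)
  qed
  have prefix_y: "prefix_of y (length q) = q" if "P n = q @ r" for n q r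
  proof (rule nth_equalityI)
    fix k assume "k < length (prefix_of y (length q))"
    then show "prefix_of y (length q) ! k = q ! k"
      using y_nth[of k n] that by (simp add: nth_append)
  qed simp
  show ?thesis
  proof
    have "y k \<in> K" for k
      using set_P[of "Suc k"] length_P[of "Suc k"] by (auto simp: y_def)
    moreover have "v n \<in> range y" for n
      using y_nth[of "length (P n @ ext (P n))" "Suc n"] by (simp add: P_Suc nth_append) (metis rangeI)
    ultimately show "is_enumeration y K"
      using range_v by (auto simp: is_enumeration_def)
    show "\<exists>T\<ge>N. Bad (prefix_of y T)" for N
      using length_P[of N] ext[OF set_P] prefix_y[OF P_Suc[of N, unfolded append.assoc[symmetric]]]
      by (intro exI[of _ "length (P N @ ext (P N))"]) auto
  qed
qed

lemma measurable_output_event: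
  assumes "online_rand_alg M A"
  shows "{\<omega> \<in> space M. P (A xs \<omega>)} \<in> sets M"
proof -
  have "A xs -` {n. P n} \<inter> space M \<in> sets M"
    by (rule measurable_sets) (use assms in \<open>auto simp: online_rand_alg_def\<close>)
  then show ?thesis
    by (simp add: vimage_def Int_def conj_commute)
qed

lemma sets_PiM_coordinate_event:
  "{f. P (f t)} \<in> sets (PiM UNIV (\<lambda>_. count_space UNIV))"
proof -
  have "(\<lambda>f. f t) \<in> measurable (PiM UNIV (\<lambda>_. count_space UNIV)) (count_space UNIV)"
    by (rule measurable_component_singleton) simp
  then have "(\<lambda>f. f t) -` {x. P x} \<inter> space (PiM UNIV (\<lambda>_. count_space UNIV))
      \<in> sets (PiM UNIV (\<lambda>_. count_space UNIV))"
    by (rule measurable_sets) simp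
  then show ?thesis
    by (simp add: space_PiM vimage_def)
qed

lemma dp_continual_group_privacy:
  assumes dp: "dp_continual \<epsilon> M A" and "0 \<le> \<epsilon>"
    and E: "E \<in> sets (PiM UNIV (\<lambda>_::nat. count_space (UNIV::nat set)))"
    and "finite F" and "\<And>u. u \<notin> F \<Longrightarrow> s u = s' u"
  shows "measure M {\<omega> \<in> space M. output_seq A s \<omega> \<in> E}
    \<le> exp \<epsilon> ^ card F * measure M {\<omega> \<in> space M. output_seq A s' \<omega> \<in> E}"
  using \<open>finite F\<close> \<open>\<And>u. u \<notin> F \<Longrightarrow> s u = s' u\<close>
proof (induction F arbitrary: s)
  case empty
  then show ?case
    by (simp add: fun_eq_iff)
next
  case (insert t F)
  let ?P = "\<lambda>s. measure M {\<omega> \<in> space M. output_seq A s \<omega> \<in> E}"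
  have "?P s \<le> exp \<epsilon> * ?P (s(t := s' t))"
  proof (cases "s t = s' t")
    case True
    then show ?thesis
      using \<open>0 \<le> \<epsilon>\<close> mult_right_mono[of 1 "exp \<epsilon>" "?P s"] by (simp add: fun_upd_idem)
  next
    case False
    then have "neighboring s (s(t := s' t))"
      by (auto simp: neighboring_def)
    then show ?thesis
      using dp E by (simp add: dp_continual_def)
  qed
  also have "\<dots> \<le> exp \<epsilon> * (exp \<epsilon> ^ card F * ?P s')"
    using insert.prems by (intro mult_left_mono insert.IH) auto
  finally show ?case
    using insert.hyps by (simp add: mult.assoc)
qed

lemma identifies_in_limit_error_tendsto_zero:
  assumes alg: "online_rand_alg M A" and "identifies_in_limit M A L"
    and "K \<in> range L" and "is_enumeration s K"
  shows "(\<lambda>T. measure M {\<omega> \<in> space M. L (A (prefix_of s T) \<omega>) \<noteq> K}) \<longlonglongrightarrow> 0"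
proof -
  interpret prob_space M
    using alg by (simp add: online_rand_alg_def)
  define G where "G T = {\<omega> \<in> space M. L (A (prefix_of s T) \<omega>) \<noteq> K}" for T
  have G: "G T \<in> sets M" for T
    unfolding G_def using alg by (rule measurable_output_event)
  have "AE \<omega> in M. \<exists>n0. \<forall>n\<ge>n0. L (A (prefix_of s n) \<omega>) = K"
    using assms(2-4) unfolding identifies_in_limit_def by (fast elim: AE_mp)
  then have lim: "AE \<omega> in M. (\<lambda>T. indicator (G T) \<omega> :: real) \<longlonglongrightarrow> 0"
  proof (rule AE_mp, intro AE_I2 impI)
    fix \<omega> assume "\<exists>n0. \<forall>n\<ge>n0. L (A (prefix_of s n) \<omega>) = K"
    then obtain n0 where "\<forall>n\<ge>n0. L (A (prefix_of s n) \<omega>) = K" ..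
    then have "eventually (\<lambda>T. indicator (G T) \<omega> = (0::real)) sequentially"
      by (auto simp: eventually_sequentially G_def intro!: exI[of _ n0])
    then show "(\<lambda>T. indicator (G T) \<omega> :: real) \<longlonglongrightarrow> 0"
      by (rule tendsto_eventually)
  qed
  have "(\<lambda>T. integral\<^sup>L M (indicator (G T) :: 'a \<Rightarrow> real)) \<longlonglongrightarrow> integral\<^sup>L M (\<lambda>_. 0)"
    by (rule integral_dominated_convergence[where w = "\<lambda>_. 1", OF _ _ _ lim])
      (use G in \<open>auto simp: indicator_def\<close>)
  then show ?thesis
    using G by (simp add: G_def[symmetric])
qed

lemma dp_error_tendsto_zero_finite_modification:
  assumes alg: "online_rand_alg M A" and dp: "dp_continual \<epsilon> M A" and "0 \<le> \<epsilon>"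
    and id: "identifies_in_limit M A L" and "K \<in> range L" and "is_enumeration s K"
    and "finite F" and "\<And>u. u \<notin> F \<Longrightarrow> s' u = s u"
  shows "(\<lambda>T. measure M {\<omega> \<in> space M. L (A (prefix_of s' T) \<omega>) \<noteq> K}) \<longlonglongrightarrow> 0"
proof -
  let ?err = "\<lambda>s T. measure M {\<omega> \<in> space M. L (A (prefix_of s T) \<omega>) \<noteq> K}"
  have bound: "?err s' (Suc T) \<le> exp \<epsilon> ^ card F * ?err s (Suc T)" for T
    using dp_continual_group_privacy[OF dp \<open>0 \<le> \<epsilon>\<close> sets_PiM_coordinate_event \<open>finite F\<close>, of s' s]
      assms(8) by (simp add: output_seq_def)
  have bound_lim: "(\<lambda>T. exp \<epsilon> ^ card F * ?err s (Suc T)) \<longlonglongrightarrow> 0"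
    using identifies_in_limit_error_tendsto_zero[OF alg id assms(5,6)]
    by (intro tendsto_mult_right_zero) (rule LIMSEQ_Suc)
  have "(\<lambda>T. ?err s' (Suc T)) \<longlonglongrightarrow> 0"
  proof (rule tendsto_sandwich[OF _ _ tendsto_const bound_lim])
    show "eventually (\<lambda>T. 0 \<le> ?err s' (Suc T)) sequentially"
      by simp
    show "eventually (\<lambda>T. ?err s' (Suc T) \<le> exp \<epsilon> ^ card F * ?err s (Suc T)) sequentially"
      using bound by simp
  qed
  then show ?thesis
    by (rule LIMSEQ_imp_Suc)
qed

lemma dp_extension_with_small_error:
  fixes K K' :: "'x::countable set"
  assumes alg: "online_rand_alg M A" and dp: "dp_continual \<epsilon> M A" and "0 \<le> \<epsilon>"
    and id: "identifies_in_limit M A L" and "K \<in> range L"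
    and "finite (K - K')" and "K \<inter> K' \<noteq> {}"
  shows "\<exists>q. set q \<subseteq> K \<inter> K' \<and> measure M {\<omega> \<in> space M. L (A (p @ q) \<omega>) \<noteq> K} < 1/2"
proof -
  let ?err = "\<lambda>xs. measure M {\<omega> \<in> space M. L (A xs \<omega>) \<noteq> K}"
  obtain e :: "nat \<Rightarrow> 'x" where e: "range e = K \<inter> K'" "\<And>x N. x \<in> K \<inter> K' \<Longrightarrow> \<exists>n\<ge>N. e n = x"
    using countable_enumeration_infinitely_often[OF countableI_type \<open>K \<inter> K' \<noteq> {}\<close>] by blast
  obtain ds where "set ds = K - K'"
    using \<open>finite (K - K')\<close> finite_list by blast
  then have enum: "is_enumeration (overwrite_prefix ds e) K"
    using e by (intro is_enumeration_overwrite_prefix) auto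
  have agree: "overwrite_prefix p e u = overwrite_prefix ds e u" if "u \<notin> {..<length p + length ds}" for u
    using that by (simp add: overwrite_prefix_beyond)
  have "(\<lambda>T. ?err (prefix_of (overwrite_prefix p e) T)) \<longlonglongrightarrow> 0"
    by (rule dp_error_tendsto_zero_finite_modification[OF alg dp \<open>0 \<le> \<epsilon>\<close> id \<open>K \<in> range L\<close> enum
          finite_lessThan agree])
  then have "eventually (\<lambda>T. length p \<le> T \<and> ?err (prefix_of (overwrite_prefix p e) T) < 1/2) sequentially"
    by (intro eventually_conj eventually_ge_at_top order_tendstoD(2)) auto
  then obtain T where "length p \<le> T" and "?err (prefix_of (overwrite_prefix p e) T) < 1/2"
    using eventually_happens'[OF sequentially_bot] by blast
  then have "?err (p @ map e [length p..<T]) < 1/2"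
    by (simp add: prefix_of_overwrite_prefix)
  moreover have "set (map e [length p..<T]) \<subseteq> K \<inter> K'"
    using e(1) by auto
  ultimately show ?thesis
    by blast
qed

lemma measure_two_wrong_outputs_ge_one:
  assumes "online_rand_alg M A" and "K \<noteq> K'"
  shows "1 \<le> measure M {\<omega> \<in> space M. L (A xs \<omega>) \<noteq> K} + measure M {\<omega> \<in> space M. L (A xs \<omega>) \<noteq> K'}"
    (is "1 \<le> measure M ?X + measure M ?Y")
proof -
  interpret prob_space M
    using assms(1) by (simp add: online_rand_alg_def)
  have "?X \<union> ?Y = space M"
    using assms(2) by auto
  then have "1 = measure M (?X \<union> ?Y)"
    by (simp only: prob_space)
  also have "\<dots> \<le> measure M ?X + measure M ?Y"
    by (rule measure_Un_le) (rule measurable_output_event[OF assms(1)])+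
  finally show ?thesis .
qed

theorem theorem1p4:
  fixes L :: "nat \<Rightarrow> ('x::countable) set" and M :: "'w measure"
    and A :: "'x list \<Rightarrow> 'w \<Rightarrow> nat" and \<epsilon> :: real and i j :: nat
  assumes langs: "\<forall>k. is_language (L k)"
    and distinct: "L i \<noteq> L j"
    and inter_inf: "infinite (L i \<inter> L j)"
    and diff_fin: "finite (L i - L j)"
    and eps: "\<epsilon> > 0"
    and alg: "online_rand_alg M A"
    and dp: "dp_continual \<epsilon> M A"
  shows "\<not> identifies_in_limit M A L"
proof
  assume id: "identifies_in_limit M A L"
  let ?err = "\<lambda>K xs. measure M {\<omega> \<in> space M. L (A xs \<omega>) \<noteq> K}"
  have common: "L i \<inter> L j \<noteq> {}"
    using inter_inf by auto
  have "\<exists>q. set q \<subseteq> L j \<and> ?err (L i) (p @ q) < 1/2" for p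
    using dp_extension_with_small_error[OF alg dp _ id rangeI diff_fin common, of p] eps by auto
  then obtain y where y: "is_enumeration y (L j)"
    and bad: "\<And>N. \<exists>T\<ge>N. ?err (L i) (prefix_of y T) < 1/2"
    using enumeration_with_infinitely_many_bad_prefixes[OF countableI_type, of "L j" "\<lambda>xs. ?err (L i) xs < 1/2"]
      common by blast
  obtain N where N: "\<And>T. N \<le> T \<Longrightarrow> ?err (L j) (prefix_of y T) < 1/2"
    using order_tendstoD(2)[OF identifies_in_limit_error_tendsto_zero[OF alg id rangeI y], of "1/2"]
    by (auto simp: eventually_sequentially)
  obtain T where "N \<le> T" and "?err (L i) (prefix_of y T) < 1/2"
    using bad by blast
  then show False
    using N[OF \<open>N \<le> T\<close>] measure_two_wrong_outputs_ge_one[OF alg distinct, where L = L and xs = "prefix_of y T"]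
    by linarith
qed

end
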